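(* Let $k\ge 1$ and $m\ge 0$ be integers, set $A=\lfloor m/k\rfloor$, and let $Q$ be an even polynomial with real coefficients of degree at most $2m$. Then there exist real numbers $C_{a,b,j,l}$, indexed by $0\le a\le A$, $0\le b\le k-1$, $0\le j\le k$, $l\in\{0,1\}$, such that $$Q(x)=\sum_{a=0}^{A}\sum_{b=0}^{k-1}\sum_{j=0}^{k}\sum_{l=0}^{1}C_{a,b,j,l}\,T_a(x)^{2j}\,T_b(x)^{2l}\qquad\text{for all }x,$$ and $$\sum_{a,b,j,l}|C_{a,b,j,l}|\le 3k\,(A+1)(A+2)\,(1+\sqrt2)^{2k}\,\|Q\|_{[-1,1]}.$$ In particular, when $2m=d-k$, this $\ell^1$-norm is $O\big(\|Q\|_{[-1,1]}\,d^2(1+\sqrt2)^{2k}/k\big)$, and each polynomial $T_a(x)^{2j}T_b(x)^{2l}$ equals $\prod_{s=1}^k|\mathcal{R}_s(x)|^2$ on $\mathbb{R}$ for real polynomials $\mathcal{R}_s\in\{1,T_a,T_b,T_aT_b\}$ of definite parity, degree at most $A+k-1$, and $\|\mathcal{R}_s\|_{[-1,1]}\le 1$.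
   Context: $T_m$ denotes the Chebyshev polynomial of the first kind, i.e. the polynomial with $T_m(\cos\theta)=\cos(m\theta)$ for all real $\theta$. For a function $f$ on $[-1,1]$, $\|f\|_{[-1,1]}:=\max_{x\in[-1,1]}|f(x)|$. *)

theory Defs
  imports "HOL-Analysis.Analysis" "HOL-Computational_Algebra.Polynomial"
begin

definition cheb :: "nat \<Rightarrow> real poly" where
  "cheb m = (THE p. \<forall>t::real. poly p (cos t) = cos (real m * t))"

definition supnorm :: "real poly \<Rightarrow> real" where
  "supnorm p = (SUP x\<in>{-1..1}. \<bar>poly p x\<bar>)"

definition even_poly :: "real poly \<Rightarrow> bool" where
  "even_poly p \<longleftrightarrow> (\<forall>x. poly p (-x) = poly p x)"

definition odd_poly :: "real poly \<Rightarrow> bool" where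
  "odd_poly p \<longleftrightarrow> (\<forall>x. poly p (-x) = - poly p x)"

end

theory Submission
  imports Defs
begin

text \<open>Expand the even polynomial \<open>Q\<close> as \<open>\<Sum>n\<le>m. c(2n) T(2n)\<close>; orthogonality of
  \<open>cos (n t)\<close> on \<open>[0, \<pi>]\<close> gives \<open>\<bar>c(2n)\<bar> \<le> 2 \<parallel>Q\<parallel>\<close>. Write \<open>n = a k + b\<close> with
  \<open>b < k\<close>. Since \<open>T(2ak) = T(2k) \<circ> T(a)\<close> is a polynomial in \<open>T(a)\<^sup>2\<close> of degree \<open>k\<close> whose
  coefficients have absolute sum at most \<open>((1+\<surd>2)\<^sup>2\<^sup>k + (1-\<surd>2)\<^sup>2\<^sup>k)/2\<close>, and
  \<open>T(2b) = 2 T(b)\<^sup>2 - 1\<close>, the identity \<open>T(2(ak+b)) = 2 T(2ak) T(2b) - T(2((a-1)k + (k-b)))\<close>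
  expresses every \<open>T(2n)\<close> as a combination of the products \<open>T(a)\<^sup>2\<^sup>j T(b)\<^sup>2\<^sup>l\<close> whose
  coefficient \<open>\<ell>\<^sup>1\<close>-norm grows only linearly in \<open>a\<close>; summing over \<open>n\<close> gives the bound.\<close>

section \<open>Chebyshev polynomials\<close>

fun cheb_rec :: "nat \<Rightarrow> real poly" where
  "cheb_rec 0 = 1"
| "cheb_rec (Suc 0) = [:0, 1:]"
| "cheb_rec (Suc (Suc n)) = pCons 0 (smult 2 (cheb_rec (Suc n))) - cheb_rec n"

lemma poly_cheb_rec_cos: "poly (cheb_rec n) (cos t) = cos (real n * t)"
proof (induction n rule: cheb_rec.induct)
  case (3 n)
  have "real (Suc (Suc n)) * t = real (Suc n) * t + t" "real n * t = real (Suc n) * t - t"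
    by (simp_all add: algebra_simps)
  then have "cos (real (Suc (Suc n)) * t) = 2 * cos t * cos (real (Suc n) * t) - cos (real n * t)"
    by (simp only: cos_add cos_diff) (simp add: algebra_simps)
  with 3 show ?case by simp
qed auto

lemma poly_eqI_cos:
  fixes p q :: "real poly"
  assumes "\<And>t. poly p (cos t) = poly q (cos t)"
  shows "p = q"
proof -
  have "poly p x = poly q x" if "x \<in> {-1..1}" for x
    using assms[of "arccos x"] that by (simp add: cos_arccos)
  then have "{-1..1::real} \<subseteq> {x. poly (p - q) x = 0}" by auto
  moreover have "infinite {-1..1::real}" by simp
  ultimately have "p - q = 0" using poly_roots_finite infinite_super by blast
  then show ?thesis by simp
qed

lemma cheb_eq_cheb_rec: "cheb n = cheb_rec n"
  unfolding cheb_def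
proof (rule the_equality)
  fix p assume "\<forall>t. poly p (cos t) = cos (real n * t)"
  then show "p = cheb_rec n" by (intro poly_eqI_cos) (simp add: poly_cheb_rec_cos)
qed (simp add: poly_cheb_rec_cos)

lemma poly_cheb_cos: "poly (cheb n) (cos t) = cos (real n * t)"
  by (simp add: cheb_eq_cheb_rec poly_cheb_rec_cos)

lemma poly_cheb_0 [simp]: "poly (cheb 0) x = 1"
  by (simp add: cheb_eq_cheb_rec)

lemma poly_cheb_compose: "poly (cheb p) (poly (cheb q) x) = poly (cheb (p * q)) x"
proof -
  have "pcompose (cheb p) (cheb q) = cheb (p * q)"
    by (rule poly_eqI_cos) (simp add: poly_pcompose poly_cheb_cos mult.assoc)
  then show ?thesis by (metis poly_pcompose)
qed

lemma poly_cheb_mult: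
  assumes "q \<le> p"
  shows "2 * poly (cheb p) x * poly (cheb q) x = poly (cheb (p + q)) x + poly (cheb (p - q)) x"
proof -
  have "smult 2 (cheb p * cheb q) = cheb (p + q) + cheb (p - q)"
  proof (rule poly_eqI_cos)
    fix t
    have "real (p + q) * t = real p * t + real q * t" "real (p - q) * t = real p * t - real q * t"
      using assms by (simp_all add: algebra_simps of_nat_diff)
    then show "poly (smult 2 (cheb p * cheb q)) (cos t) = poly (cheb (p + q) + cheb (p - q)) (cos t)"
      by (simp add: poly_cheb_cos cos_add cos_diff)
  qed
  then show ?thesis by (metis mult.assoc poly_add poly_mult poly_smult)
qed

lemma poly_cheb_double: "poly (cheb (2 * b)) x = 2 * poly (cheb b) x ^ 2 - 1"
  using poly_cheb_mult[of b b x] by (simp add: power2_eq_square flip: mult_2)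

lemma poly_cheb_minus: "poly (cheb n) (- x) = (-1) ^ n * poly (cheb n) x"
proof -
  have "poly (cheb_rec n) (- x) = (-1) ^ n * poly (cheb_rec n) x"
    by (induction n rule: cheb_rec.induct) (auto simp: algebra_simps)
  then show ?thesis by (simp add: cheb_eq_cheb_rec)
qed

lemma cheb_rec_degree_le_and_lead: "degree (cheb_rec n) \<le> n \<and> coeff (cheb_rec n) n \<ge> 1"
proof (induction n rule: cheb_rec.induct)
  case (3 n)
  have "degree (pCons 0 (smult 2 (cheb_rec (Suc n))) - cheb_rec n) \<le> Suc (Suc n)"
    using 3 by (intro degree_diff_le) (auto intro: order_trans[OF degree_pCons_le])
  moreover have "coeff (cheb_rec n) (Suc (Suc n)) = 0"
    using 3 by (intro coeff_eq_0) auto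
  ultimately show ?case using 3 by simp
qed auto

lemma coeff_cheb_lead_nonzero: "coeff (cheb n) n \<noteq> 0"
  using cheb_rec_degree_le_and_lead[of n] by (simp add: cheb_eq_cheb_rec)

lemma degree_cheb: "degree (cheb n) = n"
  using cheb_rec_degree_le_and_lead[of n] le_degree[OF coeff_cheb_lead_nonzero[of n]]
  by (simp add: cheb_eq_cheb_rec)

lemma coeff_cheb_rec_parity: "odd (n + i) \<Longrightarrow> coeff (cheb_rec n) i = 0"
proof (induction n arbitrary: i rule: cheb_rec.induct)
  case 1 then show ?case by (cases i) (auto simp: coeff_1)
next
  case 2 then show ?case by (cases i) (auto simp: coeff_pCons split: nat.splits intro: Nat.gr0I)
next
  case (3 n) then show ?case by (cases i) (auto simp: coeff_pCons)
qed

lemma abs_poly_cheb_le_1: "x \<in> {-1..1} \<Longrightarrow> \<bar>poly (cheb n) x\<bar> \<le> 1"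
  by (metis atLeastAtMost_iff poly_cheb_cos abs_cos_le_one cos_arccos)

section \<open>Coefficient sums of Chebyshev polynomials\<close>

definition coeff_abs_sum :: "nat \<Rightarrow> real poly \<Rightarrow> real" where
  "coeff_abs_sum N p = (\<Sum>i\<le>N. \<bar>coeff p i\<bar>)"

lemma coeff_abs_sum_diff: "coeff_abs_sum N (p - q) \<le> coeff_abs_sum N p + coeff_abs_sum N q"
  unfolding coeff_abs_sum_def sum.distrib[symmetric]
  by (intro sum_mono) (simp add: abs_triangle_ineq4)

lemma coeff_abs_sum_pCons_0: "coeff_abs_sum (Suc N) (pCons 0 p) = coeff_abs_sum N p"
  unfolding coeff_abs_sum_def sum.atMost_Suc_shift by simp

lemma coeff_abs_sum_smult: "coeff_abs_sum N (smult c p) = \<bar>c\<bar> * coeff_abs_sum N p"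
  unfolding coeff_abs_sum_def by (simp add: sum_distrib_left abs_mult)

lemma coeff_abs_sum_degree_le:
  assumes "degree p \<le> N" "N \<le> M"
  shows "coeff_abs_sum M p = coeff_abs_sum N p"
  unfolding coeff_abs_sum_def
  by (rule sum.mono_neutral_right) (use assms in \<open>auto simp: coeff_eq_0\<close>)

text \<open>Half the Pell--Lucas numbers; they satisfy the recurrence \<open>L (n+2) = 2 L (n+1) + L n\<close>,
  which majorises the three-term recurrence of the Chebyshev polynomials coefficientwise.\<close>
definition pell_lucas_half :: "nat \<Rightarrow> real" where
  "pell_lucas_half n = ((1 + sqrt 2) ^ n + (1 - sqrt 2) ^ n) / 2"

lemma pell_lucas_half_Suc_Suc:
  "pell_lucas_half (Suc (Suc n)) = 2 * pell_lucas_half (Suc n) + pell_lucas_half n"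
proof -
  have "r ^ Suc (Suc n) = 2 * r ^ Suc n + r ^ n" if "r * r = 2 * r + 1" for r :: real
  proof -
    have "r ^ Suc (Suc n) = r ^ n * (r * r)" by (simp add: algebra_simps)
    with that show ?thesis by (simp add: algebra_simps)
  qed
  moreover have "(1 + sqrt 2) * (1 + sqrt 2) = 2 * (1 + sqrt 2) + 1"
    and "(1 - sqrt 2) * (1 - sqrt 2) = 2 * (1 - sqrt 2) + 1"
    by (simp_all add: algebra_simps)
  ultimately show ?thesis
    unfolding pell_lucas_half_def by (simp del: power_Suc add: field_simps)
qed

lemma pell_lucas_half_even:
  "pell_lucas_half (2 * k) = ((1 + sqrt 2) ^ (2 * k) + 1 / (1 + sqrt 2) ^ (2 * k)) / 2"
proof -
  have "(1 - sqrt 2) ^ (2 * k) * (1 + sqrt 2) ^ (2 * k) = ((1 - sqrt 2) * (1 + sqrt 2)) ^ (2 * k)"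
    by (simp add: power_mult_distrib)
  also have "\<dots> = 1" by (simp add: algebra_simps flip: power_mult)
  moreover have "1 + sqrt 2 \<noteq> (0::real)"
    by (smt (verit) real_sqrt_ge_zero zero_le_numeral)
  ultimately have "(1 - sqrt 2) ^ (2 * k) = 1 / (1 + sqrt 2) ^ (2 * k)"
    by (simp add: eq_divide_eq)
  then show ?thesis by (simp add: pell_lucas_half_def)
qed

lemma coeff_abs_sum_cheb_rec: "coeff_abs_sum n (cheb_rec n) \<le> pell_lucas_half n"
proof (induction n rule: cheb_rec.induct)
  case (3 n)
  let ?N = "Suc (Suc n)"
  have "coeff_abs_sum ?N (cheb_rec ?N) \<le>
        coeff_abs_sum ?N (pCons 0 (smult 2 (cheb_rec (Suc n)))) + coeff_abs_sum ?N (cheb_rec n)"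
    by (simp add: coeff_abs_sum_diff)
  also have "coeff_abs_sum ?N (cheb_rec n) = coeff_abs_sum n (cheb_rec n)"
    using cheb_rec_degree_le_and_lead[of n] by (intro coeff_abs_sum_degree_le) auto
  also have "coeff_abs_sum ?N (pCons 0 (smult 2 (cheb_rec (Suc n)))) =
             2 * coeff_abs_sum (Suc n) (cheb_rec (Suc n))"
    by (simp add: coeff_abs_sum_pCons_0 coeff_abs_sum_smult)
  finally show ?case using 3 pell_lucas_half_Suc_Suc[of n] by simp
qed (simp_all add: coeff_abs_sum_def pell_lucas_half_def)

lemma sum_atMost_double_split:
  fixes k :: nat
  shows "(\<Sum>i\<le>2 * k. f i) = (\<Sum>j\<le>k. f (2 * j)) + (\<Sum>j<k. f (2 * j + 1))"
  by (induction k) (simp_all add: numeral_2_eq_2 algebra_simps)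

lemma poly_cheb_even_as_poly_of_square:
  "poly (cheb (2 * k)) y = (\<Sum>j\<in>{0..k}. coeff (cheb (2 * k)) (2 * j) * y ^ (2 * j))"
proof -
  have "poly (cheb (2 * k)) y = (\<Sum>i\<le>2 * k. coeff (cheb (2 * k)) i * y ^ i)"
    by (simp add: poly_altdef degree_cheb)
  then show ?thesis
    by (simp add: sum_atMost_double_split cheb_eq_cheb_rec coeff_cheb_rec_parity atLeast0AtMost)
qed

lemma cheb_even_coeff_abs_sum:
  "(\<Sum>j\<in>{0..k}. \<bar>coeff (cheb (2 * k)) (2 * j)\<bar>) \<le> pell_lucas_half (2 * k)"
proof -
  have "(\<Sum>j\<in>{0..k}. \<bar>coeff (cheb (2 * k)) (2 * j)\<bar>) = coeff_abs_sum (2 * k) (cheb_rec (2 * k))"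
    unfolding coeff_abs_sum_def
    by (simp add: sum_atMost_double_split cheb_eq_cheb_rec coeff_cheb_rec_parity atLeast0AtMost)
  then show ?thesis using coeff_abs_sum_cheb_rec by simp
qed

section \<open>Chebyshev expansions and their coefficients\<close>

lemma cheb_expansion_exists:
  fixes p :: "real poly"
  assumes "degree p \<le> N"
  shows "\<exists>c. \<forall>x. poly p x = (\<Sum>n\<le>N. c n * poly (cheb n) x)"
  using assms
proof (induction N arbitrary: p)
  case 0
  then have "poly p x = coeff p 0" for x by (simp add: poly_altdef)
  then show ?case by (intro exI[of _ "\<lambda>_. coeff p 0"]) simp
next
  case (Suc N)
  define f where "f = coeff p (Suc N) / coeff (cheb (Suc N)) (Suc N)"
  define q where "q = p - smult f (cheb (Suc N))"
  have "coeff q i = 0" if "N < i" for i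
  proof (cases "i = Suc N")
    case True
    then show ?thesis using coeff_cheb_lead_nonzero[of "Suc N"] by (simp add: q_def f_def)
  next
    case False
    with that Suc.prems show ?thesis by (simp add: q_def coeff_eq_0 degree_cheb)
  qed
  then have "degree q \<le> N" by (intro degree_le) auto
  then obtain c where "\<forall>x. poly q x = (\<Sum>n\<le>N. c n * poly (cheb n) x)" using Suc.IH by blast
  then have "\<forall>x. poly p x = (\<Sum>n\<le>Suc N. (c(Suc N := f)) n * poly (cheb n) x)"
    by (simp add: q_def algebra_simps)
  then show ?case by blast
qed

lemma even_poly_cheb_expansion:
  assumes "even_poly Q" and c: "\<forall>x. poly Q x = (\<Sum>n\<le>2 * m. c n * poly (cheb n) x)"
  shows "poly Q x = (\<Sum>n\<le>m. c (2 * n) * poly (cheb (2 * n)) x)"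
proof -
  have "poly Q x = (poly Q x + poly Q (-x)) / 2"
    using assms(1) by (simp add: even_poly_def)
  also have "\<dots> = (\<Sum>n\<le>2 * m. c n * ((poly (cheb n) x + (-1) ^ n * poly (cheb n) x) / 2))"
    using c by (simp add: poly_cheb_minus sum.distrib[symmetric] sum_divide_distrib algebra_simps)
  also have "\<dots> = (\<Sum>n\<le>m. c (2 * n) * poly (cheb (2 * n)) x)"
    by (simp add: sum_atMost_double_split)
  finally show ?thesis .
qed

lemma abs_poly_le_supnorm:
  assumes "x \<in> {-1..1}"
  shows "\<bar>poly p x\<bar> \<le> supnorm p"
proof -
  have "bdd_above ((\<lambda>x. \<bar>poly p x\<bar>) ` {-1..1::real})"
    by (intro bounded_imp_bdd_above compact_imp_bounded compact_continuous_image continuous_intros)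
      auto
  then show ?thesis unfolding supnorm_def using assms by (intro cSUP_upper) auto
qed

lemma supnorm_le:
  assumes "\<And>x. x \<in> {-1..1} \<Longrightarrow> \<bar>poly p x\<bar> \<le> c"
  shows "supnorm p \<le> c"
  unfolding supnorm_def using assms by (intro cSUP_least) auto

lemma supnorm_nonneg: "supnorm p \<ge> 0"
  using abs_poly_le_supnorm[of 1 p] by simp

lemma has_integral_cos_int_multiple:
  fixes z :: int
  shows "((\<lambda>t. cos (of_int z * t)) has_integral (if z = 0 then pi else 0)) {0..pi}"
proof (cases "z = 0")
  case True
  then show ?thesis using has_integral_const_real[of "1::real" 0 pi] by simp
next
  case False
  define F :: "real \<Rightarrow> real" where "F t = sin (of_int z * t) / of_int z" for t
  have "((\<lambda>t. cos (of_int z * t)) has_integral (F pi - F 0)) {0..pi}"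
  proof (rule fundamental_theorem_of_calculus)
    fix t :: real
    have "(F has_real_derivative cos (of_int z * t)) (at t within {0..pi})"
      unfolding F_def using False by (auto intro!: derivative_eq_intros)
    then show "(F has_vector_derivative cos (of_int z * t)) (at t within {0..pi})"
      by (simp add: has_real_derivative_iff_has_vector_derivative)
  qed simp
  moreover have "F pi = 0"
    using sin_npi_int[of z] by (simp add: F_def mult.commute)
  ultimately show ?thesis using False by (simp add: F_def)
qed

lemma has_integral_cos_mult_cos:
  fixes n p :: nat
  shows "((\<lambda>t. cos (real n * t) * cos (real p * t)) has_integral
           (if n = p then (if p = 0 then pi else pi / 2) else 0)) {0..pi}"
proof -
  have "cos (real n * t) * cos (real p * t) =
          cos (of_int (int n - int p) * t) / 2 + cos (of_int (int n + int p) * t) / 2" for t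
  proof -
    have "of_int (int n - int p) * t = real n * t - real p * t"
      and "of_int (int n + int p) * t = real n * t + real p * t"
      by (simp_all add: algebra_simps)
    then show ?thesis by (simp add: cos_add cos_diff field_simps)
  qed
  moreover have "((\<lambda>t. cos (of_int (int n - int p) * t) / 2 + cos (of_int (int n + int p) * t) / 2)
      has_integral ((if int n - int p = 0 then pi else 0) / 2 + (if int n + int p = 0 then pi else 0) / 2))
      {0..pi}"
    by (intro has_integral_add has_integral_divide has_integral_cos_int_multiple)
  moreover have "(if int n - int p = 0 then pi else 0) / 2 + (if int n + int p = 0 then pi else 0) / 2
      = (if n = p then (if p = 0 then pi else pi / 2) else 0)"
    by auto
  ultimately show ?thesis by simp
qed

text \<open>By orthogonality, \<open>\<integral>\<^sub>0\<^sup>\<pi> p(cos t) cos(i t) dt\<close> equals \<open>c i\<close> times \<open>\<pi>\<close> or \<open>\<pi>/2\<close>,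
  and its absolute value is at most \<open>\<pi> \<parallel>p\<parallel>\<close>.\<close>
lemma cheb_expansion_coeff_bound:
  assumes c: "\<forall>x. poly p x = (\<Sum>n\<le>N. c n * poly (cheb n) x)" and "i \<le> N"
  shows "\<bar>c i\<bar> \<le> 2 * supnorm p"
proof -
  define w where "w = (if i = 0 then pi else pi / 2)"
  have "((\<lambda>t. \<Sum>n\<le>N. c n * (cos (real n * t) * cos (real i * t))) has_integral
         (\<Sum>n\<le>N. c n * (if n = i then w else 0))) {0..pi}"
    unfolding w_def by (intro has_integral_sum has_integral_mult_right has_integral_cos_mult_cos) auto
  moreover have "(\<Sum>n\<le>N. c n * (if n = i then w else 0)) = c i * w"
    using assms(2) by (simp add: if_distrib cong: if_cong)
  moreover have "(\<Sum>n\<le>N. c n * (cos (real n * t) * cos (real i * t))) =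
                 poly p (cos t) * cos (real i * t)" for t
    using c by (simp add: poly_cheb_cos sum_distrib_right mult.assoc)
  ultimately have "((\<lambda>t. poly p (cos t) * cos (real i * t)) has_integral c i * w) (cbox 0 pi)"
    by simp
  then have "norm (c i * w) \<le> supnorm p * Henstock_Kurzweil_Integration.content (cbox 0 pi)"
  proof (rule has_integral_bound[OF supnorm_nonneg])
    fix t
    have "\<bar>poly p (cos t)\<bar> \<le> supnorm p" by (rule abs_poly_le_supnorm) simp
    then have "\<bar>poly p (cos t)\<bar> * \<bar>cos (real i * t)\<bar> \<le> supnorm p * 1"
      by (intro mult_mono) (simp_all add: supnorm_nonneg)
    then show "norm (poly p (cos t) * cos (real i * t)) \<le> supnorm p"
      by (simp add: abs_mult)
  qed
  then have "\<bar>c i\<bar> * w \<le> (2 * supnorm p) * (pi / 2)"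
    by (simp add: abs_mult w_def)
  moreover have "\<bar>c i\<bar> * (pi / 2) \<le> \<bar>c i\<bar> * w"
    by (intro mult_left_mono) (auto simp: w_def)
  ultimately have "\<bar>c i\<bar> * (pi / 2) \<le> (2 * supnorm p) * (pi / 2)" by linarith
  then show ?thesis by (rule mult_right_le_imp_le) simp
qed

section \<open>Combinations of products of squared Chebyshev polynomials\<close>

text \<open>\<open>C a b j l\<close> is the coefficient of \<open>T(a)\<^sup>2\<^sup>j T(b)\<^sup>2\<^sup>l\<close>, for \<open>a \<le> A\<close>, \<open>b < k\<close>,
  \<open>j \<le> k\<close> and \<open>l \<le> 1\<close>; entries outside this range are ignored.\<close>
type_synonym sos_coeffs = "nat \<Rightarrow> nat \<Rightarrow> nat \<Rightarrow> nat \<Rightarrow> real"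

definition sos_eval :: "nat \<Rightarrow> nat \<Rightarrow> sos_coeffs \<Rightarrow> real \<Rightarrow> real" where
  "sos_eval k A C x = (\<Sum>a\<in>{0..A}. \<Sum>b\<in>{0..<k}. \<Sum>j\<in>{0..k}. \<Sum>l\<in>{0..1::nat}.
     C a b j l * poly (cheb a) x ^ (2 * j) * poly (cheb b) x ^ (2 * l))"

definition sos_l1 :: "nat \<Rightarrow> nat \<Rightarrow> sos_coeffs \<Rightarrow> real" where
  "sos_l1 k A C = (\<Sum>a\<in>{0..A}. \<Sum>b\<in>{0..<k}. \<Sum>j\<in>{0..k}. \<Sum>l\<in>{0..1::nat}. \<bar>C a b j l\<bar>)"

definition sos_block :: "nat \<Rightarrow> nat \<Rightarrow> (nat \<Rightarrow> nat \<Rightarrow> real) \<Rightarrow> sos_coeffs" where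
  "sos_block a b F = (\<lambda>a' b' j l. if a' = a \<and> b' = b then F j l else 0)"

lemma sos_eval_lincomb:
  "sos_eval k A (\<lambda>a b j l. u * C a b j l + v * D a b j l) x = u * sos_eval k A C x + v * sos_eval k A D x"
  unfolding sos_eval_def by (simp only: sum.distrib sum_distrib_left algebra_simps)

lemma sos_l1_lincomb:
  "sos_l1 k A (\<lambda>a b j l. u * C a b j l + v * D a b j l) \<le> \<bar>u\<bar> * sos_l1 k A C + \<bar>v\<bar> * sos_l1 k A D"
proof -
  have "sos_l1 k A (\<lambda>a b j l. u * C a b j l + v * D a b j l) \<le>
     (\<Sum>a\<in>{0..A}. \<Sum>b\<in>{0..<k}. \<Sum>j\<in>{0..k}. \<Sum>l\<in>{0..1::nat}. \<bar>u\<bar> * \<bar>C a b j l\<bar> + \<bar>v\<bar> * \<bar>D a b j l\<bar>)"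
    unfolding sos_l1_def by (intro sum_mono) (metis abs_mult abs_triangle_ineq)
  also have "\<dots> = \<bar>u\<bar> * sos_l1 k A C + \<bar>v\<bar> * sos_l1 k A D"
    unfolding sos_l1_def by (simp only: sum.distrib sum_distrib_left)
  finally show ?thesis .
qed

lemma sos_l1_nonneg: "0 \<le> sos_l1 k A C"
  unfolding sos_l1_def by (intro sum_nonneg) auto

lemma sos_eval_sum:
  "sos_eval k A (\<lambda>a b j l. \<Sum>n\<in>S. c n * D n a b j l) x = (\<Sum>n\<in>S. c n * sos_eval k A (D n) x)"
proof (induction S rule: infinite_finite_induct)
  case (insert n S)
  then show ?case using sos_eval_lincomb[of k A "c n" "D n" 1] by simp
qed (simp_all add: sos_eval_def)

lemma sos_l1_sum:
  "sos_l1 k A (\<lambda>a b j l. \<Sum>n\<in>S. c n * D n a b j l) \<le> (\<Sum>n\<in>S. \<bar>c n\<bar> * sos_l1 k A (D n))"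
proof (induction S rule: infinite_finite_induct)
  case (insert n S)
  have "sos_l1 k A (\<lambda>a b j l. \<Sum>n\<in>insert n S. c n * D n a b j l) \<le>
          \<bar>c n\<bar> * sos_l1 k A (D n) + sos_l1 k A (\<lambda>a b j l. \<Sum>n\<in>S. c n * D n a b j l)"
    using insert.hyps sos_l1_lincomb[of k A "c n" "D n" 1] by simp
  then show ?case using insert by simp
qed (simp_all add: sos_l1_def)

lemma sum_sum_delta:
  assumes "finite S" "finite T" "a \<in> S" "b \<in> T"
  shows "(\<Sum>a'\<in>S. \<Sum>b'\<in>T. if a' = a \<and> b' = b then G a' b' else 0) = G a b"
proof -
  have "(\<Sum>b'\<in>T. if a' = a \<and> b' = b then G a' b' else 0) = (if a' = a then G a' b else 0)" for a'
    using assms by (cases "a' = a") simp_all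
  then show ?thesis using assms by simp
qed

lemma sum_atLeast0_atMost_1: "(\<Sum>l\<in>{0..1::nat}. f l) = f 0 + f 1"
  by (simp add: atLeast0_atMost_Suc add.commute)

lemma sos_eval_block:
  assumes "a \<le> A" "b < k"
  shows "sos_eval k A (sos_block a b F) x = (\<Sum>j\<in>{0..k}.
           F j 0 * poly (cheb a) x ^ (2 * j) + F j 1 * poly (cheb a) x ^ (2 * j) * poly (cheb b) x ^ 2)"
proof -
  define G where "G a' b' = (\<Sum>j\<in>{0..k}. \<Sum>l\<in>{0..1::nat}.
                   F j l * poly (cheb a') x ^ (2 * j) * poly (cheb b') x ^ (2 * l))" for a' b'
  have "sos_eval k A (sos_block a b F) x =
          (\<Sum>a'\<in>{0..A}. \<Sum>b'\<in>{0..<k}. if a' = a \<and> b' = b then G a' b' else 0)"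
    unfolding sos_eval_def sos_block_def G_def by (intro sum.cong refl) auto
  also have "\<dots> = G a b" using assms by (intro sum_sum_delta) auto
  finally show ?thesis by (simp add: G_def sum_atLeast0_atMost_1)
qed

lemma sos_l1_block:
  assumes "a \<le> A" "b < k"
  shows "sos_l1 k A (sos_block a b F) = (\<Sum>j\<in>{0..k}. \<bar>F j 0\<bar> + \<bar>F j 1\<bar>)"
proof -
  have "sos_l1 k A (sos_block a b F) =
          (\<Sum>a'\<in>{0..A}. \<Sum>b'\<in>{0..<k}. if a' = a \<and> b' = b then
             (\<Sum>j\<in>{0..k}. \<Sum>l\<in>{0..1::nat}. \<bar>F j l\<bar>) else 0)"
    unfolding sos_l1_def sos_block_def by (intro sum.cong refl) auto
  also have "\<dots> = (\<Sum>j\<in>{0..k}. \<Sum>l\<in>{0..1::nat}. \<bar>F j l\<bar>)"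
    using assms by (intro sum_sum_delta) auto
  finally show ?thesis by (simp add: sum_atLeast0_atMost_1)
qed

lemma sos_repr_cheb_double:
  assumes "b < k"
  shows "\<exists>C. (\<forall>x. sos_eval k A C x = poly (cheb (2 * b)) x) \<and> sos_l1 k A C \<le> 3"
proof (intro exI conjI allI)
  let ?C = "sos_block 0 b (\<lambda>j l. if j = 0 then (if l = 1 then 2 else -1) else 0)"
  fix x
  have "sos_eval k A ?C x = (\<Sum>j\<in>{0..k}. if j = 0 then 2 * poly (cheb b) x ^ 2 - 1 else 0)"
    using assms by (simp only: sos_eval_block zero_le) (intro sum.cong refl, simp)
  then show "sos_eval k A ?C x = poly (cheb (2 * b)) x" by (simp add: poly_cheb_double)
  have "sos_l1 k A ?C = (\<Sum>j\<in>{0..k}. if j = 0 then 3 else 0)"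
    using assms by (simp only: sos_l1_block zero_le) (intro sum.cong refl, simp)
  then show "sos_l1 k A ?C \<le> 3" by simp
qed

lemma poly_cheb_mult_k:
  "poly (cheb (2 * (a * k))) x =
     (\<Sum>j\<in>{0..k}. coeff (cheb (2 * k)) (2 * j) * poly (cheb a) x ^ (2 * j))"
proof -
  have "poly (cheb (2 * (a * k))) x = poly (cheb (2 * k)) (poly (cheb a) x)"
    by (simp add: poly_cheb_compose mult_ac)
  then show ?thesis by (simp only: poly_cheb_even_as_poly_of_square)
qed

lemma sos_repr_cheb_mult_k:
  assumes "a \<le> A" "0 < k"
  shows "\<exists>C. (\<forall>x. sos_eval k A C x = poly (cheb (2 * (a * k))) x)
             \<and> sos_l1 k A C \<le> pell_lucas_half (2 * k)"
proof (intro exI conjI allI)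
  let ?C = "sos_block a 0 (\<lambda>j l. if l = 0 then coeff (cheb (2 * k)) (2 * j) else 0)"
  show "sos_eval k A ?C x = poly (cheb (2 * (a * k))) x" for x
    using assms by (simp add: sos_eval_block poly_cheb_mult_k)
  show "sos_l1 k A ?C \<le> pell_lucas_half (2 * k)"
    using assms cheb_even_coeff_abs_sum[of k] by (simp add: sos_l1_block)
qed

lemma sos_repr_cheb_mult_k_mult_double:
  assumes "a \<le> A" "b < k"
  shows "\<exists>C. (\<forall>x. sos_eval k A C x = poly (cheb (2 * (a * k))) x * poly (cheb (2 * b)) x)
             \<and> sos_l1 k A C \<le> 3 * pell_lucas_half (2 * k)"
proof (intro exI conjI allI)
  define t where "t j = coeff (cheb (2 * k)) (2 * j)" for j
  let ?C = "sos_block a b (\<lambda>j l. if l = 1 then 2 * t j else - t j)"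
  fix x
  have "sos_eval k A ?C x =
          (\<Sum>j\<in>{0..k}. t j * poly (cheb a) x ^ (2 * j) * (2 * poly (cheb b) x ^ 2 - 1))"
    using assms by (simp only: sos_eval_block) (intro sum.cong refl, simp add: algebra_simps)
  also have "\<dots> = (\<Sum>j\<in>{0..k}. t j * poly (cheb a) x ^ (2 * j)) * (2 * poly (cheb b) x ^ 2 - 1)"
    by (simp only: sum_distrib_right)
  finally have "sos_eval k A ?C x = \<dots>" .
  then show "sos_eval k A ?C x = poly (cheb (2 * (a * k))) x * poly (cheb (2 * b)) x"
    by (simp only: t_def poly_cheb_mult_k poly_cheb_double[of b])
  have "sos_l1 k A ?C = 3 * (\<Sum>j\<in>{0..k}. \<bar>t j\<bar>)"
    using assms by (simp add: sos_l1_block sum_distrib_left abs_mult)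
  then show "sos_l1 k A ?C \<le> 3 * pell_lucas_half (2 * k)"
    using cheb_even_coeff_abs_sum[of k] by (simp add: t_def)
qed

definition repr_bound :: "nat \<Rightarrow> nat \<Rightarrow> nat \<Rightarrow> real" where
  "repr_bound k a b =
     (if b = 0 \<and> 0 < a then pell_lucas_half (2 * k) else 6 * real a * pell_lucas_half (2 * k) + 3)"

text \<open>Induction on \<open>a\<close> via \<open>T(2(a+1)k + 2b) = 2 T(2(a+1)k) T(2b) - T(2ak + 2(k-b))\<close>; the new
  residue \<open>k - b\<close> lies in \<open>{1..<k}\<close>, so the recursion never uses the cheap case \<open>b = 0\<close>.\<close>
lemma sos_repr_cheb_even:
  assumes "a \<le> A" "b < k"
  shows "\<exists>C. (\<forall>x. sos_eval k A C x = poly (cheb (2 * (a * k + b))) x) \<and> sos_l1 k A C \<le> repr_bound k a b"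
  using assms
proof (induction a arbitrary: b)
  case 0
  then show ?case using sos_repr_cheb_double[of b k A] by (simp add: repr_bound_def)
next
  case (Suc a)
  show ?case
  proof (cases "b = 0")
    case True
    then show ?thesis using Suc.prems sos_repr_cheb_mult_k[of "Suc a" A k] by (simp add: repr_bound_def)
  next
    case False
    let ?L = "pell_lucas_half (2 * k)"
    obtain C1 where C1: "\<And>x. sos_eval k A C1 x = poly (cheb (2 * (Suc a * k))) x * poly (cheb (2 * b)) x"
      and l1_C1: "sos_l1 k A C1 \<le> 3 * ?L"
      using sos_repr_cheb_mult_k_mult_double[of "Suc a" A b k] Suc.prems by blast
    obtain C2 where C2: "\<And>x. sos_eval k A C2 x = poly (cheb (2 * (a * k + (k - b)))) x"
      and l1_C2: "sos_l1 k A C2 \<le> 6 * real a * ?L + 3"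
      using Suc.IH[of "k - b"] Suc.prems False by (auto simp: repr_bound_def)
    define C where "C = (\<lambda>a b j l. 2 * C1 a b j l + (-1) * C2 a b j l)"
    have "sos_eval k A C x = poly (cheb (2 * (Suc a * k + b))) x" for x
    proof -
      have "sos_eval k A C x = 2 * sos_eval k A C1 x + (-1) * sos_eval k A C2 x"
        unfolding C_def by (rule sos_eval_lincomb)
      also have "\<dots> = 2 * poly (cheb (2 * (Suc a * k))) x * poly (cheb (2 * b)) x
                         - poly (cheb (2 * (Suc a * k) - 2 * b)) x"
        using Suc.prems by (simp add: C1 C2 algebra_simps)
      also have "\<dots> = poly (cheb (2 * (Suc a * k + b))) x"
        using poly_cheb_mult[of "2 * b" "2 * (Suc a * k)" x] Suc.prems by simp
      finally show ?thesis .
    qed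
    moreover have "sos_l1 k A C \<le> repr_bound k (Suc a) b"
      using sos_l1_lincomb[of k A 2 C1 "-1" C2] l1_C1 l1_C2 False
      by (simp add: C_def repr_bound_def algebra_simps)
    ultimately show ?thesis by blast
  qed
qed

lemma one_plus_sqrt2_pow_ge: "real k + 1 \<le> (1 + sqrt 2) ^ (2 * k)"
proof -
  have "(1 + sqrt 2) ^ 2 = 1 + (2 + 2 * sqrt 2)"
    by (simp add: power2_eq_square algebra_simps)
  then have "(1 + sqrt 2) ^ (2 * k) = (1 + (2 + 2 * sqrt 2)) ^ k"
    by (simp only: power_mult)
  also have "\<dots> \<ge> 1 + real k * (2 + 2 * sqrt 2)"
    by (rule Bernoulli_inequality) simp
  finally show ?thesis
    using mult_left_mono[of 1 "2 + 2 * sqrt 2" "real k"] by simp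
qed

lemma pell_lucas_half_even_nonneg: "0 \<le> pell_lucas_half (2 * k)"
  using one_plus_sqrt2_pow_ge[of k] by (simp add: pell_lucas_half_even)

lemma repr_bound_nonneg: "0 \<le> repr_bound k a b"
  using pell_lucas_half_even_nonneg[of k] by (simp add: repr_bound_def)

lemma repr_bound_block_sum:
  assumes "1 \<le> k"
  shows "(\<Sum>b<k. repr_bound k a b) \<le> 3 * real k * (real a + 1) * (1 + sqrt 2) ^ (2 * k)"
proof -
  define P where "P = (1 + sqrt 2) ^ (2 * k)"
  define L where "L = pell_lucas_half (2 * k)"
  define K where "K = real k - 1"
  have P: "real k + 1 \<le> P" unfolding P_def by (rule one_plus_sqrt2_pow_ge)
  have "{..<k} = insert 0 {1..<k}" using assms by auto
  then have "(\<Sum>b<k. repr_bound k a b) = repr_bound k a 0 + (\<Sum>b\<in>{1..<k}. 6 * real a * L + 3)"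
    by (simp add: repr_bound_def L_def)
  also have "\<dots> = repr_bound k a 0 + K * (6 * real a * L + 3)"
    using assms by (simp add: K_def of_nat_diff)
  finally have sum_eq: "(\<Sum>b<k. repr_bound k a b) = repr_bound k a 0 + K * (6 * real a * L + 3)" .
  show ?thesis
  proof (cases "a = 0")
    case True
    have "3 * real k * 1 \<le> 3 * real k * P" using P by (intro mult_left_mono) auto
    with True sum_eq show ?thesis by (simp add: repr_bound_def K_def P_def algebra_simps)
  next
    case False
    define e where "e = 1 / P"
    have L: "L = (P + e) / 2" by (simp add: L_def P_def e_def pell_lucas_half_even)
    have "K \<le> P" "0 \<le> K" "1 \<le> P" using P assms by (auto simp: K_def)
    then have "K * e \<le> 1" "e \<le> 1" "0 \<le> e" by (auto simp: e_def divide_le_eq)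
    then have "real a * (K * e) \<le> real a" "real a \<le> real a * P" "K \<le> K * P"
      using \<open>1 \<le> P\<close> \<open>0 \<le> K\<close> mult_left_mono[of 1 P K] mult_left_mono[of 1 P "real a"]
      by (auto simp: mult_left_le)
    moreover have "repr_bound k a 0 + K * (6 * real a * L + 3) =
        P / 2 + e / 2 + 3 * real a * K * P + 3 * (real a * (K * e)) + 3 * K"
    proof -
      have r: "repr_bound k a 0 = (P + e) / 2" using False L by (simp add: repr_bound_def L_def)
      show ?thesis unfolding r L by (simp add: field_simps)
    qed
    moreover have "3 * real k * (real a + 1) * P = 3 * real a * K * P + 3 * (K * P) + 3 * (real a * P) + 3 * P"
      by (simp add: K_def algebra_simps)
    ultimately show ?thesis
      using sum_eq \<open>e \<le> 1\<close> \<open>1 \<le> P\<close> by (simp add: P_def[symmetric])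
  qed
qed

lemma repr_bound_sum:
  assumes "1 \<le> k"
  shows "(\<Sum>n\<le>m. repr_bound k (n div k) (n mod k)) \<le>
           3 / 2 * real k * (real (m div k) + 1) * (real (m div k) + 2) * (1 + sqrt 2) ^ (2 * k)"
proof -
  define A where "A = m div k"
  define g where "g n = repr_bound k (n div k) (n mod k)" for n
  have "m = A * k + m mod k" "m mod k < k"
    using assms by (simp_all add: A_def)
  then have "m < Suc A * k" by simp
  then have "(\<Sum>n\<le>m. g n) \<le> (\<Sum>n<Suc A * k. g n)"
    by (intro sum_mono2) (auto simp: g_def repr_bound_nonneg)
  also have "\<dots> = (\<Sum>a<Suc A. \<Sum>n\<in>{a * k..<a * k + k}. g n)"
    by (rule sum.nat_group[symmetric])
  also have "\<dots> = (\<Sum>a<Suc A. \<Sum>b<k. repr_bound k a b)"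
  proof (rule sum.cong[OF refl])
    fix a
    have "(\<Sum>n\<in>{a * k..<a * k + k}. g n) = (\<Sum>b\<in>{0..<k}. g (b + a * k))"
      using sum.shift_bounds_nat_ivl[of g 0 "a * k" k] by (simp add: add.commute)
    also have "\<dots> = (\<Sum>b<k. repr_bound k a b)"
      using assms by (intro sum.cong) (auto simp: g_def atLeast0LessThan)
    finally show "(\<Sum>n\<in>{a * k..<a * k + k}. g n) = (\<Sum>b<k. repr_bound k a b)" .
  qed
  also have "\<dots> \<le> (\<Sum>a<Suc A. 3 * real k * (real a + 1) * (1 + sqrt 2) ^ (2 * k))"
    by (intro sum_mono repr_bound_block_sum assms)
  also have "\<dots> = 3 * real k * (1 + sqrt 2) ^ (2 * k) * (\<Sum>a<Suc A. real a + 1)"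
    by (subst sum_distrib_left, intro sum.cong refl) (simp add: algebra_simps)
  also have "(\<Sum>a<Suc A. real a + 1) = (real A + 1) * (real A + 2) / 2"
    by (induction A) (simp_all add: field_simps)
  finally show ?thesis by (simp add: g_def A_def field_simps)
qed

lemma even_poly_sos_repr:
  assumes "1 \<le> k" "even_poly Q" "degree Q \<le> 2 * m"
  defines "A \<equiv> m div k"
  shows "\<exists>C. (\<forall>x. sos_eval k A C x = poly Q x) \<and>
             sos_l1 k A C \<le> 3 * real k * (real A + 1) * (real A + 2) * (1 + sqrt 2) ^ (2 * k) * supnorm Q"
proof -
  obtain c where c: "\<forall>x. poly Q x = (\<Sum>n\<le>2 * m. c n * poly (cheb n) x)"
    using cheb_expansion_exists[OF assms(3)] by blast
  have "\<forall>n\<in>{..m}. \<exists>D. (\<forall>x. sos_eval k A D x = poly (cheb (2 * n)) x)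
                      \<and> sos_l1 k A D \<le> repr_bound k (n div k) (n mod k)"
    using sos_repr_cheb_even[of "n div k" A "n mod k" k for n] assms(1)
    by (simp add: A_def div_le_mono)
  then obtain D where D: "\<And>n x. n \<le> m \<Longrightarrow> sos_eval k A (D n) x = poly (cheb (2 * n)) x"
    and l1_D: "\<And>n. n \<le> m \<Longrightarrow> sos_l1 k A (D n) \<le> repr_bound k (n div k) (n mod k)"
    by (metis atMost_iff)
  define C where "C = (\<lambda>a b j l. \<Sum>n\<le>m. c (2 * n) * D n a b j l)"
  have "sos_eval k A C x = poly Q x" for x
  proof -
    have "sos_eval k A C x = (\<Sum>n\<le>m. c (2 * n) * sos_eval k A (D n) x)"
      unfolding C_def by (rule sos_eval_sum)
    also have "\<dots> = (\<Sum>n\<le>m. c (2 * n) * poly (cheb (2 * n)) x)"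
      by (intro sum.cong refl) (simp add: D)
    finally show ?thesis using even_poly_cheb_expansion[OF assms(2) c] by simp
  qed
  moreover have "sos_l1 k A C \<le> (\<Sum>n\<le>m. (2 * supnorm Q) * repr_bound k (n div k) (n mod k))"
    unfolding C_def using cheb_expansion_coeff_bound[OF c] l1_D
    by (intro order_trans[OF sos_l1_sum] sum_mono mult_mono) (auto simp: sos_l1_nonneg supnorm_nonneg)
  moreover have "\<dots> \<le> 3 * real k * (real A + 1) * (real A + 2) * (1 + sqrt 2) ^ (2 * k) * supnorm Q"
    using mult_left_mono[OF repr_bound_sum[OF assms(1), of m] supnorm_nonneg[of Q]]
    by (simp add: sum_distrib_left[symmetric] A_def mult_ac)
  ultimately show ?thesis by (intro exI[of _ C]) auto
qed

section \<open>The basis elements as products of squares\<close>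

lemma even_or_odd_polyI:
  assumes "\<And>x. poly p (-x) = (-1) ^ n * poly p x"
  shows "even_poly p \<or> odd_poly p"
  using assms by (cases "even n") (simp_all add: even_poly_def odd_poly_def)

lemma cheb_factor_props:
  assumes "p \<in> {1, cheb a, cheb b, cheb a * cheb b}" "a \<le> A" "b < k"
  shows "(even_poly p \<or> odd_poly p) \<and> degree p \<le> A + k - 1 \<and> supnorm p \<le> 1"
proof (intro conjI)
  have "\<exists>n. \<forall>x. poly p (-x) = (-1) ^ n * poly p x"
    using assms(1)
  proof (elim insertE emptyE)
    assume "p = cheb a * cheb b"
    then show ?thesis by (intro exI[of _ "a + b"]) (simp add: poly_cheb_minus power_add)
  qed (auto simp: poly_cheb_minus intro: exI[of _ 0])
  then show "even_poly p \<or> odd_poly p" using even_or_odd_polyI by blast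
  show "degree p \<le> A + k - 1"
    using assms degree_mult_le[of "cheb a" "cheb b"] by (auto simp: degree_cheb)
  show "supnorm p \<le> 1"
  proof (rule supnorm_le)
    fix x :: real assume "x \<in> {-1..1}"
    then show "\<bar>poly p x\<bar> \<le> 1"
      using assms(1) abs_poly_cheb_le_1[of x a] abs_poly_cheb_le_1[of x b]
      by (auto simp: abs_mult mult_le_one)
  qed
qed

lemma prod_atLeastAtMost_if_le:
  assumes "j \<le> k"
  shows "(\<Prod>s\<in>{1..k}. if s \<le> j then c else 1) = c ^ j"
proof -
  have "{1..k} \<inter> {s. s \<le> j} = {1..j}" using assms by auto
  then show ?thesis by (simp add: prod.If_cases)
qed

lemma cheb_powers_eq_prod_squares:
  assumes "1 \<le> k" "a \<le> A" "b < k" "j \<le> k" "l \<le> 1"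
  shows "\<exists>R :: nat \<Rightarrow> real poly.
          (\<forall>s\<in>{1..k}. R s \<in> {1, cheb a, cheb b, cheb a * cheb b}
              \<and> (even_poly (R s) \<or> odd_poly (R s))
              \<and> degree (R s) \<le> A + k - 1
              \<and> supnorm (R s) \<le> 1)
          \<and> (\<forall>x::real. poly (cheb a) x ^ (2 * j) * poly (cheb b) x ^ (2 * l)
                = (\<Prod>s\<in>{1..k}. \<bar>poly (R s) x\<bar> ^ 2))"
proof -
  define R where "R s = (if s \<le> j then cheb a else 1) * (if s = 1 \<and> l = 1 then cheb b else 1)" for s
  have R: "R s \<in> {1, cheb a, cheb b, cheb a * cheb b}" for s
    unfolding R_def by auto
  have "(\<Prod>s\<in>{1..k}. \<bar>poly (R s) x\<bar> ^ 2) =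
        (\<Prod>s\<in>{1..k}. (if s \<le> j then poly (cheb a) x ^ 2 else 1) *
                      (if s = 1 \<and> l = 1 then poly (cheb b) x ^ 2 else 1))" for x
    by (intro prod.cong refl) (simp add: R_def power_mult_distrib)
  also have "\<dots> x = poly (cheb a) x ^ (2 * j) * poly (cheb b) x ^ (2 * l)" for x
    using assms(1,5) unfolding prod.distrib prod_atLeastAtMost_if_le[OF assms(4)]
    by (cases l) (simp_all add: power_mult)
  finally show ?thesis
    using R cheb_factor_props[OF R assms(2,3)] by (intro exI[of _ R]) auto
qed

theorem mainTheorem8:
  fixes k m :: nat and Q :: "real poly"
  assumes "k \<ge> 1"
    and "even_poly Q"
    and "degree Q \<le> 2 * m"
  shows "\<exists>C :: nat \<Rightarrow> nat \<Rightarrow> nat \<Rightarrow> nat \<Rightarrow> real.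
     (\<forall>x::real. poly Q x =
        (\<Sum>a\<in>{0..m div k}. \<Sum>b\<in>{0..<k}. \<Sum>j\<in>{0..k}. \<Sum>l\<in>{0..1::nat}.
           C a b j l * poly (cheb a) x ^ (2 * j) * poly (cheb b) x ^ (2 * l)))
   \<and> (\<Sum>a\<in>{0..m div k}. \<Sum>b\<in>{0..<k}. \<Sum>j\<in>{0..k}. \<Sum>l\<in>{0..1::nat}. \<bar>C a b j l\<bar>)
       \<le> 3 * real k * (real (m div k) + 1) * (real (m div k) + 2)
           * (1 + sqrt 2) ^ (2 * k) * supnorm Q
   \<and> (\<forall>a\<in>{0..m div k}. \<forall>b\<in>{0..<k}. \<forall>j\<in>{0..k}. \<forall>l\<in>{0..1::nat}.
        \<exists>R :: nat \<Rightarrow> real poly.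
          (\<forall>s\<in>{1..k}. R s \<in> {1, cheb a, cheb b, cheb a * cheb b}
              \<and> (even_poly (R s) \<or> odd_poly (R s))
              \<and> degree (R s) \<le> m div k + k - 1
              \<and> supnorm (R s) \<le> 1)
          \<and> (\<forall>x::real. poly (cheb a) x ^ (2 * j) * poly (cheb b) x ^ (2 * l)
                = (\<Prod>s\<in>{1..k}. \<bar>poly (R s) x\<bar> ^ 2)))"
proof -
  obtain C where "\<forall>x. sos_eval k (m div k) C x = poly Q x"
    and "sos_l1 k (m div k) C \<le>
           3 * real k * (real (m div k) + 1) * (real (m div k) + 2) * (1 + sqrt 2) ^ (2 * k) * supnorm Q"
    using even_poly_sos_repr[OF assms] by blast
  then show ?thesis
    using cheb_powers_eq_prod_squares[OF assms(1)]
    unfolding sos_eval_def sos_l1_def by (intro exI[of _ C]) auto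
qed

end
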